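(* Let $p$ be an odd prime, $h\ge 1$, $f(x,z)\in\mathbb{F}_{p^h}[x,z]$, and let $\mathcal{S}\subset\mathbb{A}^3$ be the affine surface $y^p-y=f(x,z)$. For each $\gamma\in\mathbb{F}_{p^h}$ with $f(x,\gamma)$ non-constant, let $\mathcal{Z}_\gamma=V(y^p-y-f(x,z),\,z-\gamma)$, viewed as a plane curve $y^p-y=f(x,\gamma)$ in the plane $z=\gamma$. Let $\eta$ be a positive integer and $$\Gamma=\{\gamma\in\mathbb{F}_{p^h}: f(x,\gamma)\text{ non-constant and } \#\pi_x(\mathcal{Z}_\gamma(\mathbb{F}_{p^h}))\ge\eta\}.$$ Assume there are non-negative integers $\nu,\rho_1,\rho_2,\rho_3$ such that (1) $\deg(\mathcal{Z}_\gamma)\le\nu$ for all $\gamma\in\Gamma$; (2) $2\le\rho_1\le\eta$, $2\le\rho_2\le p$, and $0\le\rho_3\le p^2-1$; (3) there are at least $\rho_3+1$ values $\gamma\in\Gamma$ with $\#\mathcal{Z}_\gamma(\mathbb{F}_{p^h})\ge\nu(\eta-\rho_1+p-\rho_2)+1$. Let $T=\{(x,y,z)\in\mathcal{S}(\mathbb{F}_{p^h}): z\in\Gamma\}$ and $$V=\langle x^iy^jz^k: 0\le i\le\eta-\rho_1,\ 0\le j\le p-\rho_2,\ 0\le k\le\rho_3\rangle\subset\mathbb{F}_{p^h}[x,y,z],$$ and let $C=C(V,T)$. Then $C$ has hierarchical locality in the following sense: for every position $i$, corresponding to a point $P_i=(a,b,c)\in T$, (a) the lower code $C_{2,i}$ (the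 puncturing of $C$ to the $p$ positions of the fiber $\{(a,b+\delta,c):\delta\in\mathbb{F}_p\}\subset T$ of $\pi_{x,z}$ through $P_i$) has dimension at most $s_2=p-\rho_2+1$ and minimum distance at least $d_2=\rho_2$; (b) the middle code $C_{1,i}$ (the puncturing of $C$ to the positions of the points of $T$ with $z$-coordinate $c$, i.e. the points of $\mathcal{Z}_c(\mathbb{F}_{p^h})$) has dimension at most $s_1=(\eta-\rho_1+1)(p-\rho_2+1)$ and minimum distance at least $d_1=\rho_1\rho_2$, and contains the support of $C_{2,i}$. Furthermore the evaluation map on $V$ is injective, so $\dim C=(\eta-\rho_1+1)(p-\rho_2+1)(\rho_3+1)$.
   Context: A linear code of length $n$ over $\mathbb{F}_q$ is a subspace of $\mathbb{F}_q^n$; its minimum distance is the minimum Hamming distance between distinct codewords. For $I=\{i_1,\dots,i_s\}\subset\{1,\dots,n\}$, the punctured code $C|_I=\{(c_{i_1},\dots,c_{i_s}):(c_1,\dots,c_n)\in C\}$. For an ordered finite set $T=\{P_1,\dots,P_n\}$ of points and a vector space $V$ of polynomial functions, the evaluation code is $C(V,T)=\{(g(P_1),\dots,g(P_n)):g\in V\}$ (the ordering of $T$ is arbitrary). $\pi_x(a,b,c)=a$, $\pi_z(a,b,c)=c$, $\pi_{x,z}(a,b,c)=(a,c)$ are the coordinate projections on $\mathbb{A}^3$. $\deg(\mathcal{Z}_\gamma)$ denotes the degree of the plane curve $y^p-y=f(x,\gamma)$. *)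

theory Defs
  imports Main "HOL-Computational_Algebra.Polynomial" "HOL-Library.Extended_Nat" "HOL-Library.Function_Algebras"
begin

(* f(x,z) in F[x,z] is represented as an element of ('a poly) poly:
   outer variable x, coefficients are polynomials in z.
   fz f g is the univariate polynomial f(x,g) in x. *)
definition fz :: "'a::comm_ring_1 poly poly \<Rightarrow> 'a \<Rightarrow> 'a poly" where
  "fz f g = map_poly (\<lambda>c. poly c g) f"

definition fev :: "'a::comm_ring_1 poly poly \<Rightarrow> 'a \<Rightarrow> 'a \<Rightarrow> 'a" where
  "fev f a c = poly (fz f c) a"

definition Zpts :: "nat \<Rightarrow> 'a::comm_ring_1 poly poly \<Rightarrow> 'a \<Rightarrow> ('a \<times> 'a) set" where
  "Zpts p f g = {(a,b). b ^ p - b = fev f a g}"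

(* degree of the plane curve y^p - y = f(x,g): total degree of y^p - y - f(x,g) *)
definition deg_curve :: "nat \<Rightarrow> 'a::comm_ring_1 poly poly \<Rightarrow> 'a \<Rightarrow> nat" where
  "deg_curve p f g = max p (degree (fz f g))"

definition Gam :: "nat \<Rightarrow> 'a::comm_ring_1 poly poly \<Rightarrow> nat \<Rightarrow> 'a set" where
  "Gam p f eta = {g. degree (fz f g) \<ge> 1 \<and> card (fst ` Zpts p f g) \<ge> eta}"

definition Tset :: "nat \<Rightarrow> 'a::comm_ring_1 poly poly \<Rightarrow> nat \<Rightarrow> ('a \<times> 'a \<times> 'a) set" where
  "Tset p f eta = {(a,b,c). b ^ p - b = fev f a c \<and> c \<in> Gam p f eta}"

(* polynomials of V = <x^i y^j z^k : i<=A, j<=B, k<=K> are given by their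
   coefficient arrays supported on the box *)
definition box_coeffs :: "nat \<Rightarrow> nat \<Rightarrow> nat \<Rightarrow> (nat \<Rightarrow> nat \<Rightarrow> nat \<Rightarrow> 'a::zero) set" where
  "box_coeffs A B K = {co. \<forall>i j k. \<not> (i \<le> A \<and> j \<le> B \<and> k \<le> K) \<longrightarrow> co i j k = 0}"

definition mono_eval :: "nat \<Rightarrow> nat \<Rightarrow> nat \<Rightarrow> (nat \<Rightarrow> nat \<Rightarrow> nat \<Rightarrow> 'a::comm_ring_1)
    \<Rightarrow> 'a \<times> 'a \<times> 'a \<Rightarrow> 'a" where
  "mono_eval A B K co P = (case P of (x,y,z) \<Rightarrow>
     (\<Sum>i\<le>A. \<Sum>j\<le>B. \<Sum>k\<le>K. co i j k * x ^ i * y ^ j * z ^ k))"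

(* codewords are functions on the position set, zero outside it *)
definition eval_map :: "('a \<times> 'a \<times> 'a) set \<Rightarrow> nat \<Rightarrow> nat \<Rightarrow> nat
    \<Rightarrow> (nat \<Rightarrow> nat \<Rightarrow> nat \<Rightarrow> 'a::comm_ring_1) \<Rightarrow> ('a \<times> 'a \<times> 'a \<Rightarrow> 'a)" where
  "eval_map T A B K co = (\<lambda>P. if P \<in> T then mono_eval A B K co P else 0)"

definition eval_code :: "('a \<times> 'a \<times> 'a) set \<Rightarrow> nat \<Rightarrow> nat \<Rightarrow> nat
    \<Rightarrow> ('a \<times> 'a \<times> 'a \<Rightarrow> 'a::comm_ring_1) set" where
  "eval_code T A B K = eval_map T A B K ` box_coeffs A B K"

definition puncture :: "('i \<Rightarrow> 'a::zero) set \<Rightarrow> 'i set \<Rightarrow> ('i \<Rightarrow> 'a) set" where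
  "puncture C J = (\<lambda>c P. if P \<in> J then c P else 0) ` C"

definition code_dim :: "('i \<Rightarrow> 'a::field) set \<Rightarrow> nat" where
  "code_dim C = vector_space.dim (\<lambda>s v i. s * v i) C"

definition hamming :: "'i set \<Rightarrow> ('i \<Rightarrow> 'a) \<Rightarrow> ('i \<Rightarrow> 'a) \<Rightarrow> nat" where
  "hamming J c d = card {P \<in> J. c P \<noteq> d P}"

(* minimum distance (infinity for codes with fewer than two codewords) *)
definition min_dist :: "'i set \<Rightarrow> ('i \<Rightarrow> 'a) set \<Rightarrow> enat" where
  "min_dist J C = (INF cd \<in> {(c,d). c \<in> C \<and> d \<in> C \<and> c \<noteq> d}. enat (hamming J (fst cd) (snd cd)))"

end

theory Submission
  imports Defs "HOL-Number_Theory.Residues"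
begin

text \<open>
  Since (y + d)^p - (y + d) = y^p - y for d in the prime field, every point (a, b, c) of T lies
  on a vertical line {(a, b + d, c)} of p points of T, and the slice z = c of T is a union of
  such lines over at least eta distinct values of x. On a line a codeword is a polynomial in y
  of degree at most p - rho2, so it vanishes at most p - rho2 times. On a slice it is a
  polynomial in x and y; off the at most eta - rho1 roots of one of its nonzero coefficients
  (a polynomial in x), each line loses at most p - rho2 points, which gives weight at least
  rho1 * rho2. The same nested count over more than rho3 slices shows that a polynomial in V
  vanishing on T is zero.
\<close>

section \<open>Zeros of polynomials given by coefficient functions\<close>

lemma card_roots_sum_powers_le:
  fixes c :: "nat \<Rightarrow> 'a::idom"
  assumes "\<exists>i\<le>n. c i \<noteq> 0"
  shows "finite {x. (\<Sum>i\<le>n. c i * x ^ i) = 0}" and "card {x. (\<Sum>i\<le>n. c i * x ^ i) = 0} \<le> n"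
proof -
  define q where "q = (\<Sum>i\<le>n. Polynomial.monom (c i) i)"
  have poly_q: "poly q x = (\<Sum>i\<le>n. c i * x ^ i)" for x
    by (simp add: q_def poly_sum poly_monom)
  have coeff_q: "Polynomial.coeff q j = (if j \<le> n then c j else 0)" for j
    by (simp add: q_def Polynomial.coeff_sum Polynomial.coeff_monom)
  have "q \<noteq> 0"
    using assms coeff_q by (metis Polynomial.coeff_0)
  moreover have "degree q \<le> n"
    by (rule degree_le) (simp add: coeff_q)
  ultimately show "finite {x. (\<Sum>i\<le>n. c i * x ^ i) = 0}"
    and "card {x. (\<Sum>i\<le>n. c i * x ^ i) = 0} \<le> n"
    using card_poly_roots_bound[of q] poly_roots_finite[of q] by (simp_all add: poly_q)
qed

lemma card_nonroots_sum_powers_ge: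
  fixes c :: "nat \<Rightarrow> 'a::idom"
  assumes "finite S" and "\<exists>i\<le>n. c i \<noteq> 0"
  shows "card S - n \<le> card {x \<in> S. (\<Sum>i\<le>n. c i * x ^ i) \<noteq> 0}"
proof -
  let ?N = "{x \<in> S. (\<Sum>i\<le>n. c i * x ^ i) \<noteq> 0}" and ?R = "{x. (\<Sum>i\<le>n. c i * x ^ i) = 0}"
  have "card S \<le> card (?N \<union> ?R)"
    using assms(1) card_roots_sum_powers_le(1)[OF assms(2)] by (intro card_mono) auto
  also have "\<dots> \<le> card ?N + card ?R"
    by (rule card_Un_le)
  finally show ?thesis
    using card_roots_sum_powers_le(2)[OF assms(2)] by linarith
qed

lemma sum_powers_vanishing_imp_coeff_zero:
  fixes c :: "nat \<Rightarrow> 'a::idom"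
  assumes "finite S" and "n < card S" and "\<And>x. x \<in> S \<Longrightarrow> (\<Sum>i\<le>n. c i * x ^ i) = 0"
    and "i \<le> n"
  shows "c i = 0"
proof (rule ccontr)
  assume "c i \<noteq> 0"
  then have "card S - n \<le> card {x \<in> S. (\<Sum>i\<le>n. c i * x ^ i) \<noteq> 0}"
    using assms(1,4) by (intro card_nonroots_sum_powers_ge) auto
  moreover have "{x \<in> S. (\<Sum>i\<le>n. c i * x ^ i) \<noteq> 0} = {}"
    using assms(3) by blast
  ultimately show False
    using assms(2) by simp
qed

lemma card_nonroots_sum_powers2_ge:
  fixes e :: "nat \<Rightarrow> nat \<Rightarrow> 'a::idom"
  assumes "finite X" and "\<And>x. x \<in> X \<Longrightarrow> finite (Y x) \<and> m \<le> card (Y x)"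
    and "\<exists>i\<le>A. \<exists>j\<le>B. e i j \<noteq> 0"
  shows "(card X - A) * (m - B)
           \<le> card (SIGMA x:X. {y \<in> Y x. (\<Sum>i\<le>A. \<Sum>j\<le>B. e i j * x ^ i * y ^ j) \<noteq> 0})"
proof -
  obtain i0 j0 where "i0 \<le> A" "j0 \<le> B" "e i0 j0 \<noteq> 0"
    using assms(3) by blast
  define q where "q x j = (\<Sum>i\<le>A. e i j * x ^ i)" for x j
  have as_poly_in_y: "(\<Sum>i\<le>A. \<Sum>j\<le>B. e i j * x ^ i * y ^ j) = (\<Sum>j\<le>B. q x j * y ^ j)" for x y
    unfolding q_def sum_distrib_right by (rule sum.swap)
  \<comment> \<open>Off the at most A roots of the nonzero coefficient q x j0, each column Y x
      loses at most B points.\<close>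
  define G where "G = {x \<in> X. q x j0 \<noteq> 0}"
  have "card X - A \<le> card G"
    unfolding G_def q_def using assms(1) \<open>i0 \<le> A\<close> \<open>e i0 j0 \<noteq> 0\<close>
    by (intro card_nonroots_sum_powers_ge) auto
  moreover have column: "m - B \<le> card {y \<in> Y x. (\<Sum>j\<le>B. q x j * y ^ j) \<noteq> 0}" if "x \<in> G" for x
  proof -
    have "card (Y x) - B \<le> card {y \<in> Y x. (\<Sum>j\<le>B. q x j * y ^ j) \<noteq> 0}"
      using that assms(2) \<open>j0 \<le> B\<close> by (intro card_nonroots_sum_powers_ge) (auto simp: G_def)
    then show ?thesis
      using that assms(2)[of x] by (auto simp: G_def)
  qed
  ultimately have "(card X - A) * (m - B) \<le> card G * (m - B)"
    by simp
  also have "\<dots> \<le> (\<Sum>x\<in>G. card {y \<in> Y x. (\<Sum>j\<le>B. q x j * y ^ j) \<noteq> 0})"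
    using sum_bounded_below[of G "m - B"] column by simp
  also have "\<dots> = card (SIGMA x:G. {y \<in> Y x. (\<Sum>j\<le>B. q x j * y ^ j) \<noteq> 0})"
    using assms(1,2) by (simp add: G_def)
  also have "\<dots> \<le> card (SIGMA x:X. {y \<in> Y x. (\<Sum>i\<le>A. \<Sum>j\<le>B. e i j * x ^ i * y ^ j) \<noteq> 0})"
    using assms(1,2) by (intro card_mono) (auto simp: G_def as_poly_in_y)
  finally show ?thesis .
qed

lemma mono_eval_as_sum_powers_y:
  "mono_eval A B K co (x, y, z) = (\<Sum>j\<le>B. (\<Sum>i\<le>A. (\<Sum>k\<le>K. co i j k * z ^ k) * x ^ i) * y ^ j)"
  unfolding mono_eval_def
  by (simp add: sum_distrib_right sum_distrib_left mult_ac) (rule sum.swap)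

lemma mono_eval_as_sum_powers_xy:
  "mono_eval A B K co (x, y, z) = (\<Sum>i\<le>A. \<Sum>j\<le>B. (\<Sum>k\<le>K. co i j k * z ^ k) * x ^ i * y ^ j)"
  unfolding mono_eval_def by (simp add: sum_distrib_left sum_distrib_right mult_ac)

lemma mono_eval_vanishing_imp_coeff_zero:
  fixes co :: "nat \<Rightarrow> nat \<Rightarrow> nat \<Rightarrow> 'a::idom"
  assumes Z: "finite Z" "K < card Z"
    and X: "\<And>z. z \<in> Z \<Longrightarrow> finite (X z) \<and> A < card (X z)"
    and Y: "\<And>z x. z \<in> Z \<Longrightarrow> x \<in> X z \<Longrightarrow> finite (Y z x) \<and> B < card (Y z x)"
    and vanish: "\<And>z x y. z \<in> Z \<Longrightarrow> x \<in> X z \<Longrightarrow> y \<in> Y z x \<Longrightarrow> mono_eval A B K co (x, y, z) = 0"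
    and "i \<le> A" "j \<le> B" "k \<le> K"
  shows "co i j k = 0"
proof -
  have coeff_y: "(\<Sum>i\<le>A. (\<Sum>k\<le>K. co i j k * z ^ k) * x ^ i) = 0"
    if "z \<in> Z" "x \<in> X z" "j \<le> B" for z x j
    using Y[OF that(1,2)] vanish[OF that(1,2)] that(3)
    by (intro sum_powers_vanishing_imp_coeff_zero[where S = "Y z x" and n = B
          and c = "\<lambda>j. \<Sum>i\<le>A. (\<Sum>k\<le>K. co i j k * z ^ k) * x ^ i"])
       (auto simp: mono_eval_as_sum_powers_y)
  have coeff_xy: "(\<Sum>k\<le>K. co i j k * z ^ k) = 0" if "z \<in> Z" "i \<le> A" "j \<le> B" for z i j
    using X[OF that(1)] coeff_y[OF that(1) _ that(3)] that(2)
    by (intro sum_powers_vanishing_imp_coeff_zero[where S = "X z" and n = A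
          and c = "\<lambda>i. \<Sum>k\<le>K. co i j k * z ^ k"]) auto
  show ?thesis
    using Z coeff_xy assms(6-8)
    by (intro sum_powers_vanishing_imp_coeff_zero[where S = Z and n = K and c = "co i j"]) auto
qed

lemma card_nonzero_mono_eval_line_ge:
  fixes co :: "nat \<Rightarrow> nat \<Rightarrow> nat \<Rightarrow> 'a::idom"
  assumes "finite Y" and "\<exists>y\<in>Y. mono_eval A B K co (x, y, z) \<noteq> 0"
  shows "card Y - B \<le> card {P \<in> (\<lambda>y. (x, y, z)) ` Y. mono_eval A B K co P \<noteq> 0}"
proof -
  define c where "c j = (\<Sum>i\<le>A. (\<Sum>k\<le>K. co i j k * z ^ k) * x ^ i)" for j
  have on_line: "mono_eval A B K co (x, y, z) = (\<Sum>j\<le>B. c j * y ^ j)" for y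
    by (simp add: mono_eval_as_sum_powers_y c_def)
  have "\<exists>j\<le>B. c j \<noteq> 0"
  proof (rule ccontr)
    assume "\<not> ?thesis"
    then have "mono_eval A B K co (x, y, z) = 0" for y
      by (auto simp: on_line intro!: sum.neutral)
    then show False
      using assms(2) by simp
  qed
  then have "card Y - B \<le> card {y \<in> Y. (\<Sum>j\<le>B. c j * y ^ j) \<noteq> 0}"
    by (rule card_nonroots_sum_powers_ge[OF assms(1)])
  also have "\<dots> = card ((\<lambda>y. (x, y, z)) ` {y \<in> Y. (\<Sum>j\<le>B. c j * y ^ j) \<noteq> 0})"
    by (rule card_image[symmetric]) (simp add: inj_on_def)
  also have "(\<lambda>y. (x, y, z)) ` {y \<in> Y. (\<Sum>j\<le>B. c j * y ^ j) \<noteq> 0}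
      = {P \<in> (\<lambda>y. (x, y, z)) ` Y. mono_eval A B K co P \<noteq> 0}"
    by (auto simp: on_line)
  finally show ?thesis .
qed

lemma card_nonzero_mono_eval_plane_ge:
  fixes co :: "nat \<Rightarrow> nat \<Rightarrow> nat \<Rightarrow> 'a::idom"
  assumes "finite X" and "\<And>x. x \<in> X \<Longrightarrow> finite (Y x) \<and> m \<le> card (Y x)"
    and "\<exists>x\<in>X. \<exists>y\<in>Y x. mono_eval A B K co (x, y, z) \<noteq> 0"
  shows "(card X - A) * (m - B)
           \<le> card {P \<in> (\<lambda>(x, y). (x, y, z)) ` Sigma X Y. mono_eval A B K co P \<noteq> 0}"
proof -
  define e where "e i j = (\<Sum>k\<le>K. co i j k * z ^ k)" for i j
  have on_plane: "mono_eval A B K co (x, y, z) = (\<Sum>i\<le>A. \<Sum>j\<le>B. e i j * x ^ i * y ^ j)" for x y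
    by (simp add: mono_eval_as_sum_powers_xy e_def)
  have nonzero_coeff: "\<exists>i\<le>A. \<exists>j\<le>B. e i j \<noteq> 0"
  proof (rule ccontr)
    assume "\<not> ?thesis"
    then have "mono_eval A B K co (x, y, z) = 0" for x y
      by (auto simp: on_plane intro!: sum.neutral)
    then show False
      using assms(3) by simp
  qed
  have "(card X - A) * (m - B)
      \<le> card (SIGMA x:X. {y \<in> Y x. (\<Sum>i\<le>A. \<Sum>j\<le>B. e i j * x ^ i * y ^ j) \<noteq> 0})"
    using card_nonroots_sum_powers2_ge[OF assms(1,2) nonzero_coeff] by simp
  also have "\<dots> = card ((\<lambda>(x, y). (x, y, z)) `
      (SIGMA x:X. {y \<in> Y x. (\<Sum>i\<le>A. \<Sum>j\<le>B. e i j * x ^ i * y ^ j) \<noteq> 0}))"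
    by (rule card_image[symmetric]) (simp add: inj_on_def)
  also have "(\<lambda>(x, y). (x, y, z)) ` (SIGMA x:X. {y \<in> Y x. (\<Sum>i\<le>A. \<Sum>j\<le>B. e i j * x ^ i * y ^ j) \<noteq> 0})
      = {P \<in> (\<lambda>(x, y). (x, y, z)) ` Sigma X Y. mono_eval A B K co P \<noteq> 0}"
    by (auto simp: on_plane)
  finally show ?thesis .
qed

section \<open>Cosets of the prime field and the surface y^p - y = f(x, z)\<close>

lemma CHAR_eq_prime_of_card:
  assumes "prime p" and "card (UNIV :: 'a::{finite,field} set) = p ^ h" and "h \<ge> 1"
  shows "CHAR('a) = p"
proof -
  have "prime CHAR('a)"
    by (rule prime_CHAR_semidom, rule finite_imp_CHAR_pos) simp
  moreover have "CHAR('a) dvd p ^ h"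
    using CHAR_dvd_CARD[where 'a = 'a] assms(2) by simp
  ultimately show ?thesis
    using assms(1) by (metis prime_dvd_power primes_dvd_imp_eq)
qed

lemma of_nat_pow_CHAR:
  assumes "prime CHAR('a::comm_ring_1)"
  shows "(of_nat d :: 'a) ^ CHAR('a) = of_nat d"
proof (induction d)
  case 0
  then show ?case
    using assms by (simp add: prime_gt_0_nat power_0_left)
next
  case (Suc d)
  then show ?case
    using freshmans_dream[OF assms refl, of "of_nat d" 1] by (simp add: add_ac)
qed

definition prime_coset :: "'a::comm_ring_1 \<Rightarrow> 'a set" where
  "prime_coset b = {b + of_nat d | d. d < CHAR('a)}"

lemma card_prime_coset: "card (prime_coset (b :: 'a::comm_ring_1)) = CHAR('a)"
proof -
  have "inj_on (\<lambda>d. b + of_nat d :: 'a) {..<CHAR('a)}"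
    by (rule inj_onI) (auto simp: of_nat_eq_iff_cong_CHAR intro: cong_less_modulus_unique_nat)
  moreover have "prime_coset b = (\<lambda>d. b + of_nat d) ` {..<CHAR('a)}"
    by (auto simp: prime_coset_def)
  ultimately show ?thesis
    by (simp add: card_image)
qed

lemma artin_schreier_prime_coset:
  assumes "prime CHAR('a::comm_ring_1)" and "y \<in> prime_coset b"
  shows "y ^ CHAR('a) - y = b ^ CHAR('a) - (b :: 'a)"
proof -
  obtain d where "y = b + of_nat d"
    using assms(2) by (auto simp: prime_coset_def)
  then show ?thesis
    using freshmans_dream[OF assms(1) refl, of b "of_nat d"] of_nat_pow_CHAR[OF assms(1), of d]
    by simp
qed

lemma Tset_vertical_coset:
  assumes "prime p" and "CHAR('a) = p" and "(a, b, c) \<in> Tset p (f :: 'a::comm_ring_1 poly poly) eta"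
    and "y \<in> prime_coset b"
  shows "(a, y, c) \<in> Tset p f eta"
  using assms artin_schreier_prime_coset[of y b] by (simp add: Tset_def)

lemma vertical_fiber_eq_image:
  fixes b :: "'a::comm_ring_1"
  assumes "CHAR('a) = p"
  shows "{(a, b + of_nat d, c) | d. d < p} = (\<lambda>y. (a, y, c)) ` prime_coset b"
  using assms by (auto simp: prime_coset_def)

lemma card_vertical_fiber:
  fixes b :: "'a::comm_ring_1"
  assumes "CHAR('a) = p"
  shows "card {(a, b + of_nat d, c) | d. d < p} = p"
  unfolding vertical_fiber_eq_image[OF assms] using card_prime_coset[of b] assms
  by (subst card_image) (auto simp: inj_on_def)

lemma vertical_fiber_subset_Tset:
  assumes "prime p" and "CHAR('a) = p" and "(a, b, c) \<in> Tset p (f :: 'a::comm_ring_1 poly poly) eta"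
  shows "{(a, b + of_nat d, c) | d. d < p} \<subseteq> Tset p f eta"
  unfolding vertical_fiber_eq_image[OF assms(2)] using Tset_vertical_coset[OF assms] by blast

lemma vertical_fiber_subset_slice:
  assumes "prime p" and "CHAR('a) = p" and "(a, b, c) \<in> Tset p (f :: 'a::comm_ring_1 poly poly) eta"
  shows "{(a, b + of_nat d, c) | d. d < p} \<subseteq> {Q \<in> Tset p f eta. snd (snd Q) = c}"
  using vertical_fiber_subset_Tset[OF assms] by auto

lemma card_Tset_column_ge:
  fixes f :: "'a::{finite,comm_ring_1} poly poly"
  assumes "prime p" and "CHAR('a) = p" and "(a, b, c) \<in> Tset p f eta"
  shows "p \<le> card {y. (a, y, c) \<in> Tset p f eta}"
proof -
  have "prime_coset b \<subseteq> {y. (a, y, c) \<in> Tset p f eta}"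
    using Tset_vertical_coset[OF assms] by blast
  then show ?thesis
    using card_mono[of "{y. (a, y, c) \<in> Tset p f eta}" "prime_coset b"] card_prime_coset[of b] assms(2)
    by simp
qed

lemma Tset_imp_Gam: "(a, b, c) \<in> Tset p f eta \<Longrightarrow> c \<in> Gam p f eta"
  by (simp add: Tset_def)

lemma card_Tset_slice_ge:
  fixes f :: "'a::comm_ring_1 poly poly"
  assumes "c \<in> Gam p f eta"
  shows "eta \<le> card {x. \<exists>y. (x, y, c) \<in> Tset p f eta}"
proof -
  have "{x. \<exists>y. (x, y, c) \<in> Tset p f eta} = fst ` Zpts p f c"
    using assms by (force simp: Tset_def Zpts_def)
  then show ?thesis
    using assms by (simp add: Gam_def)
qed

section \<open>Dimension and distance of evaluation codes\<close>

lemma vector_space_pointwise_scale: "vector_space (\<lambda>(s::'a::field) (v::'i \<Rightarrow> 'a) i. s * v i)"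
  by unfold_locales (auto simp: fun_eq_iff algebra_simps)

lemma sum_fun_apply: "(sum g J) P = (\<Sum>j\<in>J. g j P)"
  by (induct J rule: infinite_finite_induct) auto

lemma code_dim_le_card:
  fixes C :: "('i \<Rightarrow> 'a::field) set" and W :: "'t \<Rightarrow> 'i \<Rightarrow> 'a"
  assumes "finite I" and "\<And>c. c \<in> C \<Longrightarrow> \<exists>s. c = (\<lambda>P. \<Sum>t\<in>I. s t * W t P)"
  shows "code_dim C \<le> card I"
proof -
  interpret V: vector_space "\<lambda>(s::'a) (v::'i \<Rightarrow> 'a) i. s * v i"
    by (rule vector_space_pointwise_scale)
  have "C \<subseteq> V.span (W ` I)"
  proof
    fix c assume "c \<in> C"
    then obtain s where "c = (\<lambda>P. \<Sum>t\<in>I. s t * W t P)"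
      using assms(2) by blast
    also have "\<dots> = (\<Sum>t\<in>I. (\<lambda>P. s t * W t P))"
      by (simp add: fun_eq_iff sum_fun_apply)
    also have "\<dots> \<in> V.span (W ` I)"
      by (intro V.span_sum V.span_scale[of "W _" _ "s _", simplified] V.span_base) auto
    finally show "c \<in> V.span (W ` I)" .
  qed
  then have "V.dim C \<le> card (W ` I)"
    using assms(1) by (intro V.dim_le_card) auto
  also have "\<dots> \<le> card I"
    using assms(1) by (rule card_image_le)
  finally show ?thesis
    by (simp add: code_dim_def)
qed

lemma code_dim_puncture_eval_code_le:
  fixes W :: "'t \<Rightarrow> 'a \<times> 'a \<times> 'a \<Rightarrow> 'a::field"
  assumes "finite I" and "J \<subseteq> T"
    and "\<And>co. co \<in> box_coeffs A B K \<Longrightarrow> \<exists>s. \<forall>P\<in>J. mono_eval A B K co P = (\<Sum>t\<in>I. s t * W t P)"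
  shows "code_dim (puncture (eval_code T A B K) J) \<le> card I"
proof (rule code_dim_le_card[OF assms(1), where W = "\<lambda>t P. if P \<in> J then W t P else 0"])
  fix c assume "c \<in> puncture (eval_code T A B K) J"
  then obtain co where "co \<in> box_coeffs A B K"
    and c: "c = (\<lambda>P. if P \<in> J then eval_map T A B K co P else 0)"
    by (auto simp: puncture_def eval_code_def)
  then obtain s where s: "\<forall>P\<in>J. mono_eval A B K co P = (\<Sum>t\<in>I. s t * W t P)"
    using assms(3) by blast
  have "c = (\<lambda>P. \<Sum>t\<in>I. s t * (if P \<in> J then W t P else 0))"
    using assms(2) s by (auto simp: c eval_map_def fun_eq_iff)
  then show "\<exists>s. c = (\<lambda>P. \<Sum>t\<in>I. s t * (if P \<in> J then W t P else 0))" by blast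
qed

lemma min_dist_geI:
  assumes "\<And>c d. c \<in> C \<Longrightarrow> d \<in> C \<Longrightarrow> c \<noteq> d \<Longrightarrow> n \<le> hamming J c d"
  shows "enat n \<le> min_dist J C"
  unfolding min_dist_def by (rule INF_greatest) (use assms in auto)

lemma mono_eval_diff:
  "mono_eval A B K (\<lambda>i j k. co1 i j k - co2 i j k) P = mono_eval A B K co1 P - mono_eval A B K co2 P"
  unfolding mono_eval_def by (cases P) (simp add: sum_subtractf left_diff_distrib)

lemma min_dist_puncture_eval_code_ge:
  assumes "J \<subseteq> T"
    and "\<And>co. co \<in> box_coeffs A B K \<Longrightarrow> \<exists>P\<in>J. mono_eval A B K co P \<noteq> 0 \<Longrightarrow>
            n \<le> card {P \<in> J. mono_eval A B K co P \<noteq> (0::'a::comm_ring_1)}"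
  shows "enat n \<le> min_dist J (puncture (eval_code T A B K) J)"
proof (rule min_dist_geI)
  fix c d
  assume "c \<in> puncture (eval_code T A B K) J" "d \<in> puncture (eval_code T A B K) J" "c \<noteq> d"
  then obtain co1 co2 where co: "co1 \<in> box_coeffs A B K" "co2 \<in> box_coeffs A B K"
    and c: "c = (\<lambda>P. if P \<in> J then eval_map T A B K co1 P else 0)"
    and d: "d = (\<lambda>P. if P \<in> J then eval_map T A B K co2 P else 0)"
    by (auto simp: puncture_def eval_code_def)
  define co where "co = (\<lambda>i j k. co1 i j k - co2 i j k)"
  have "co \<in> box_coeffs A B K"
    using co by (auto simp: co_def box_coeffs_def)
  have differ: "{P \<in> J. c P \<noteq> d P} = {P \<in> J. mono_eval A B K co P \<noteq> 0}"
    using assms(1) by (auto simp: c d eval_map_def co_def mono_eval_diff)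
  moreover have "{P \<in> J. c P \<noteq> d P} \<noteq> {}"
    using \<open>c \<noteq> d\<close> by (auto simp: c d fun_eq_iff split: if_split_asm)
  ultimately show "n \<le> hamming J c d"
    using assms(2)[OF \<open>co \<in> box_coeffs A B K\<close>] by (auto simp: hamming_def)
qed

lemma inj_on_eval_mapI:
  assumes "\<And>co. co \<in> box_coeffs A B K \<Longrightarrow> (\<And>P. P \<in> T \<Longrightarrow> mono_eval A B K co P = 0)
             \<Longrightarrow> co = (\<lambda>i j k. 0)"
  shows "inj_on (eval_map T A B K) (box_coeffs A B K :: (nat \<Rightarrow> nat \<Rightarrow> nat \<Rightarrow> 'a::comm_ring_1) set)"
proof (rule inj_onI)
  fix co1 co2 :: "nat \<Rightarrow> nat \<Rightarrow> nat \<Rightarrow> 'a"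
  assume "co1 \<in> box_coeffs A B K" "co2 \<in> box_coeffs A B K"
    and eq: "eval_map T A B K co1 = eval_map T A B K co2"
  then have "(\<lambda>i j k. co1 i j k - co2 i j k) \<in> box_coeffs A B K"
    by (auto simp: box_coeffs_def)
  moreover have "mono_eval A B K (\<lambda>i j k. co1 i j k - co2 i j k) P = 0" if "P \<in> T" for P
    using fun_cong[OF eq, of P] that by (simp add: eval_map_def mono_eval_diff)
  ultimately have "(\<lambda>i j k. co1 i j k - co2 i j k) = (\<lambda>i j k. 0)"
    by (rule assms)
  then show "co1 = co2"
    by (auto simp: fun_eq_iff dest: fun_cong)
qed

definition unit_coeffs :: "nat \<times> nat \<times> nat \<Rightarrow> nat \<Rightarrow> nat \<Rightarrow> nat \<Rightarrow> 'a::{zero,one}" where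
  "unit_coeffs t = (\<lambda>i j k. if (i, j, k) = t then 1 else 0)"

lemma mono_eval_cartesian:
  "mono_eval A B K co (x, y, z) =
     (\<Sum>(i, j, k)\<in>{..A} \<times> {..B} \<times> {..K}. co i j k * (x ^ i * y ^ j * z ^ k))"
proof -
  have "mono_eval A B K co (x, y, z) =
      (\<Sum>i\<le>A. \<Sum>(j, k)\<in>{..B} \<times> {..K}. co i j k * (x ^ i * y ^ j * z ^ k))"
    unfolding mono_eval_def by (simp add: sum.cartesian_product mult_ac)
  also have "\<dots> = (\<Sum>(i, j, k)\<in>{..A} \<times> {..B} \<times> {..K}. co i j k * (x ^ i * y ^ j * z ^ k))"
    by (subst sum.cartesian_product) (simp add: split_def)
  finally show ?thesis .
qed

lemma mono_eval_unit_coeffs: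
  assumes "t \<in> {..A} \<times> {..B} \<times> {..K}"
  shows "mono_eval A B K (unit_coeffs t) (x, y, z) = x ^ fst t * y ^ fst (snd t) * (z::'a::comm_ring_1) ^ snd (snd t)"
proof -
  have "mono_eval A B K (unit_coeffs t) (x, y, z) = (\<Sum>u\<in>{..A} \<times> {..B} \<times> {..K}.
      if u = t then x ^ fst u * y ^ fst (snd u) * z ^ snd (snd u) else 0)"
    unfolding mono_eval_cartesian by (intro sum.cong) (auto simp: unit_coeffs_def)
  also have "\<dots> = x ^ fst t * y ^ fst (snd t) * z ^ snd (snd t)"
    using assms by (subst sum.delta) auto
  finally show ?thesis .
qed

lemma eval_map_eq_sum_unit_coeffs:
  "eval_map T A B K co = (\<Sum>t\<in>{..A} \<times> {..B} \<times> {..K}.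
     (\<lambda>P. co (fst t) (fst (snd t)) (snd (snd t)) * eval_map T A B K (unit_coeffs t) P))"
proof (rule ext)
  fix P :: "'a::comm_ring_1 \<times> 'a \<times> 'a"
  obtain x y z where P: "P = (x, y, z)"
    by (cases P)
  show "eval_map T A B K co P = (\<Sum>t\<in>{..A} \<times> {..B} \<times> {..K}.
      (\<lambda>P. co (fst t) (fst (snd t)) (snd (snd t)) * eval_map T A B K (unit_coeffs t) P)) P"
  proof (cases "P \<in> T")
    case True
    then show ?thesis
      by (simp add: eval_map_def P sum_fun_apply mono_eval_unit_coeffs cong: sum.cong)
        (simp add: mono_eval_cartesian split_def)
  qed (simp add: eval_map_def sum_fun_apply)
qed

lemma code_dim_eval_code:
  fixes T :: "('a::field \<times> 'a \<times> 'a) set"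
  assumes inj: "inj_on (eval_map T A B K) (box_coeffs A B K)"
  shows "code_dim (eval_code T A B K) = (A + 1) * (B + 1) * (K + 1)"
proof -
  interpret V: vector_space "\<lambda>(s::'a) (v::'a \<times> 'a \<times> 'a \<Rightarrow> 'a) i. s * v i"
    by (rule vector_space_pointwise_scale)
  define I where "I = {..A} \<times> {..B} \<times> {..K}"
  define E where "E t = eval_map T A B K (unit_coeffs t)" for t
  have unit_in_box: "unit_coeffs t \<in> box_coeffs A B K" if "t \<in> I" for t
    using that by (auto simp: I_def unit_coeffs_def box_coeffs_def)
  have expand: "eval_map T A B K co = (\<Sum>t\<in>I. (\<lambda>P. co (fst t) (fst (snd t)) (snd (snd t)) * E t P))" for co
    unfolding I_def E_def by (rule eval_map_eq_sum_unit_coeffs)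
  have inj_E: "inj_on E I"
  proof (rule inj_onI)
    fix t t' assume "t \<in> I" "t' \<in> I" "E t = E t'"
    then have "(unit_coeffs t :: nat \<Rightarrow> nat \<Rightarrow> nat \<Rightarrow> 'a) = unit_coeffs t'"
      using inj unit_in_box unfolding E_def inj_on_def by blast
    then have "(unit_coeffs t :: nat \<Rightarrow> nat \<Rightarrow> nat \<Rightarrow> 'a) (fst t) (fst (snd t)) (snd (snd t))
        = unit_coeffs t' (fst t) (fst (snd t)) (snd (snd t))"
      by simp
    then show "t = t'"
      by (auto simp: unit_coeffs_def split: if_splits)
  qed
  have "V.independent (E ` I)"
  proof (rule V.independent_if_scalars_zero)
    show "finite (E ` I)"
      by (simp add: I_def)
    fix u v assume zero_comb: "(\<Sum>x\<in>E ` I. (\<lambda>i. u x * x i)) = 0" and "v \<in> E ` I"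
    then obtain t where "t \<in> I" "v = E t"
      by blast
    define co where "co = (\<lambda>i j k. if (i, j, k) \<in> I then u (E (i, j, k)) else 0)"
    have "co \<in> box_coeffs A B K"
      by (auto simp: co_def box_coeffs_def I_def)
    have "eval_map T A B K co = (\<Sum>t\<in>I. (\<lambda>P. u (E t) * E t P))"
      unfolding expand by (intro sum.cong) (auto simp: co_def)
    also have "\<dots> = eval_map T A B K (\<lambda>i j k. 0)"
      using zero_comb inj_E by (simp add: sum.reindex fun_eq_iff eval_map_def mono_eval_def)
    finally have "co = (\<lambda>i j k. 0)"
      using inj \<open>co \<in> box_coeffs A B K\<close> by (auto simp: inj_on_def box_coeffs_def)
    then have "co (fst t) (fst (snd t)) (snd (snd t)) = 0"
      by simp
    then show "u v = 0"
      using \<open>t \<in> I\<close> \<open>v = E t\<close> by (simp add: co_def)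
  qed
  moreover have "V.span (E ` I) = V.span (eval_code T A B K)"
  proof (rule V.span_eq[THEN iffD2], intro conjI)
    show "E ` I \<subseteq> V.span (eval_code T A B K)"
      using unit_in_box by (auto simp: E_def eval_code_def intro!: V.span_base)
    show "eval_code T A B K \<subseteq> V.span (E ` I)"
    proof
      fix c assume "c \<in> eval_code T A B K"
      then obtain co where "c = eval_map T A B K co"
        by (auto simp: eval_code_def)
      also have "\<dots> = (\<Sum>t\<in>I. (\<lambda>P. co (fst t) (fst (snd t)) (snd (snd t)) * E t P))"
        by (rule expand)
      also have "\<dots> \<in> V.span (E ` I)"
        by (intro V.span_sum V.span_scale[of "E _" _ "co _ _ _", simplified] V.span_base) auto
      finally show "c \<in> V.span (E ` I)" .
    qed
  qed
  ultimately have "V.dim (eval_code T A B K) = card (E ` I)"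
    by (metis V.span_eq_dim V.dim_eq_card_independent)
  also have "\<dots> = card I"
    using inj_E by (rule card_image)
  finally show ?thesis
    by (simp add: code_dim_def I_def card_cartesian_product algebra_simps)
qed

section \<open>Hierarchical locality of the code on the surface\<close>

lemma inj_on_eval_map_Tset:
  fixes f :: "'a::{finite,field} poly poly"
  assumes "prime p" and "CHAR('a) = p" and "A < eta" and "B < p" and "K < card (Gam p f eta)"
  shows "inj_on (eval_map (Tset p f eta) A B K) (box_coeffs A B K)"
proof (rule inj_on_eval_mapI)
  fix co :: "nat \<Rightarrow> nat \<Rightarrow> nat \<Rightarrow> 'a"
  assume box: "co \<in> box_coeffs A B K"
    and vanish: "\<And>P. P \<in> Tset p f eta \<Longrightarrow> mono_eval A B K co P = 0"
  define X where "X z = {x. \<exists>y. (x, y, z) \<in> Tset p f eta}" for z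
  define Y where "Y z x = {y. (x, y, z) \<in> Tset p f eta}" for z x
  have "finite (Gam p f eta)"
    by simp
  moreover have "finite (X z) \<and> A < card (X z)" if "z \<in> Gam p f eta" for z
    using card_Tset_slice_ge[OF that] assms(3) by (simp add: X_def)
  moreover have "finite (Y z x) \<and> B < card (Y z x)" if "x \<in> X z" for z x
    using that card_Tset_column_ge[OF assms(1,2)] assms(4) by (fastforce simp: X_def Y_def)
  moreover have "mono_eval A B K co (x, y, z) = 0" if "y \<in> Y z x" for z x y
    using that vanish by (simp add: Y_def)
  ultimately have coeff_zero: "co i j k = 0" if "i \<le> A" "j \<le> B" "k \<le> K" for i j k
    using mono_eval_vanishing_imp_coeff_zero[of "Gam p f eta" K X A Y B co] assms(5) that
    by blast
  show "co = (\<lambda>i j k. 0)"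
  proof (intro ext)
    fix i j k
    show "co i j k = 0"
      using box coeff_zero by (cases "i \<le> A \<and> j \<le> B \<and> k \<le> K") (auto simp: box_coeffs_def)
  qed
qed

lemma lower_code_dim_min_dist:
  fixes f :: "'a::{finite,field} poly poly" and A B K :: nat
  assumes "prime p" and "CHAR('a) = p" and "(a, b, c) \<in> Tset p f eta"
  defines "F2 \<equiv> {(a, b + of_nat d, c) | d. d < p}"
    and "C \<equiv> eval_code (Tset p f eta) A B K"
  shows "code_dim (puncture C F2) \<le> B + 1" and "enat (p - B) \<le> min_dist F2 (puncture C F2)"
proof -
  have F2: "F2 = (\<lambda>y. (a, y, c)) ` prime_coset b"
    unfolding F2_def by (rule vertical_fiber_eq_image[OF assms(2)])
  have sub: "F2 \<subseteq> Tset p f eta"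
    unfolding F2_def by (rule vertical_fiber_subset_Tset[OF assms(1-3)])
  have "code_dim (puncture C F2) \<le> card {..B}"
    unfolding C_def
  proof (rule code_dim_puncture_eval_code_le[OF _ sub, where W = "\<lambda>j P. fst (snd P) ^ j"])
    fix co :: "nat \<Rightarrow> nat \<Rightarrow> nat \<Rightarrow> 'a"
    show "\<exists>s. \<forall>P\<in>F2. mono_eval A B K co P = (\<Sum>j\<le>B. s j * fst (snd P) ^ j)"
      by (rule exI[of _ "\<lambda>j. \<Sum>i\<le>A. (\<Sum>k\<le>K. co i j k * c ^ k) * a ^ i"])
        (auto simp: F2 mono_eval_as_sum_powers_y)
  qed simp
  then show "code_dim (puncture C F2) \<le> B + 1"
    by simp
  show "enat (p - B) \<le> min_dist F2 (puncture C F2)"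
    unfolding C_def
  proof (rule min_dist_puncture_eval_code_ge[OF sub])
    fix co assume "\<exists>P\<in>F2. mono_eval A B K co P \<noteq> 0"
    then show "p - B \<le> card {P \<in> F2. mono_eval A B K co P \<noteq> 0}"
      using card_nonzero_mono_eval_line_ge[of "prime_coset b" A B K co a c]
        card_prime_coset[of b] assms(2)
      by (auto simp: F2)
  qed
qed

lemma middle_code_dim_min_dist:
  fixes f :: "'a::{finite,field} poly poly" and A B K :: nat
  assumes "prime p" and "CHAR('a) = p" and "c \<in> Gam p f eta"
  defines "F1 \<equiv> {Q \<in> Tset p f eta. snd (snd Q) = c}"
    and "C \<equiv> eval_code (Tset p f eta) A B K"
  shows "code_dim (puncture C F1) \<le> (A + 1) * (B + 1)"
    and "enat ((eta - A) * (p - B)) \<le> min_dist F1 (puncture C F1)"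
proof -
  define X where "X = {x. \<exists>y. (x, y, c) \<in> Tset p f eta}"
  define Y where "Y x = {y. (x, y, c) \<in> Tset p f eta}" for x
  have F1: "F1 = (\<lambda>(x, y). (x, y, c)) ` Sigma X Y"
    by (force simp: F1_def X_def Y_def)
  have sub: "F1 \<subseteq> Tset p f eta"
    by (auto simp: F1_def)
  have "code_dim (puncture C F1) \<le> card ({..A} \<times> {..B})"
    unfolding C_def
  proof (rule code_dim_puncture_eval_code_le[OF _ sub,
        where W = "\<lambda>t P. fst P ^ fst t * fst (snd P) ^ snd t"])
    fix co :: "nat \<Rightarrow> nat \<Rightarrow> nat \<Rightarrow> 'a"
    show "\<exists>s. \<forall>P\<in>F1. mono_eval A B K co P
        = (\<Sum>t\<in>{..A} \<times> {..B}. s t * (fst P ^ fst t * fst (snd P) ^ snd t))"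
      by (rule exI[of _ "\<lambda>t. \<Sum>k\<le>K. co (fst t) (snd t) k * c ^ k"])
        (auto simp: F1 mono_eval_as_sum_powers_xy sum.cartesian_product split_def mult_ac)
  qed simp
  then show "code_dim (puncture C F1) \<le> (A + 1) * (B + 1)"
    by (simp add: card_cartesian_product)
  have X: "finite X" "eta \<le> card X"
    using card_Tset_slice_ge[OF assms(3)] by (simp_all add: X_def)
  have Y: "finite (Y x) \<and> p \<le> card (Y x)" if "x \<in> X" for x
    using that card_Tset_column_ge[OF assms(1,2)] by (auto simp: X_def Y_def)
  show "enat ((eta - A) * (p - B)) \<le> min_dist F1 (puncture C F1)"
    unfolding C_def
  proof (rule min_dist_puncture_eval_code_ge[OF sub])
    fix co assume "\<exists>P\<in>F1. mono_eval A B K co P \<noteq> 0"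
    then have "(card X - A) * (p - B) \<le> card {P \<in> F1. mono_eval A B K co P \<noteq> 0}"
      unfolding F1
      using card_nonzero_mono_eval_plane_ge[OF X(1) Y, where A = A and B = B and K = K and co = co and z = c]
      by auto
    then show "(eta - A) * (p - B) \<le> card {P \<in> F1. mono_eval A B K co P \<noteq> 0}"
      using X(2) by (meson diff_le_mono mult_le_mono1 order_trans)
  qed
qed

theorem theorem3p1:
  fixes p h eta nu rho1 rho2 rho3 :: nat
    and f :: "'a::{finite,field} poly poly"
  assumes "prime p" and "odd p" and "h \<ge> 1" and "card (UNIV :: 'a set) = p ^ h"
    and "eta > 0"
    and deg: "\<forall>g \<in> Gam p f eta. deg_curve p f g \<le> nu"
    and "2 \<le> rho1" "rho1 \<le> eta" "2 \<le> rho2" "rho2 \<le> p" "rho3 \<le> p^2 - 1"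
    and cnt: "card {g \<in> Gam p f eta.
                 card (Zpts p f g) \<ge> nu * ((eta - rho1) + (p - rho2)) + 1} \<ge> rho3 + 1"
  shows
    "(\<forall>a b c. (a,b,c) \<in> Tset p f eta \<longrightarrow>
        (let F2 = {(a, b + of_nat d, c) | d. d < p};
             F1 = {Q \<in> Tset p f eta. snd (snd Q) = c};
             C = eval_code (Tset p f eta) (eta - rho1) (p - rho2) rho3
         in F2 \<subseteq> Tset p f eta \<and> card F2 = p
            \<and> code_dim (puncture C F2) \<le> p - rho2 + 1
            \<and> min_dist F2 (puncture C F2) \<ge> enat rho2
            \<and> code_dim (puncture C F1) \<le> (eta - rho1 + 1) * (p - rho2 + 1)
            \<and> min_dist F1 (puncture C F1) \<ge> enat (rho1 * rho2)
            \<and> F2 \<subseteq> F1))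
     \<and> inj_on (eval_map (Tset p f eta) (eta - rho1) (p - rho2) rho3)
              (box_coeffs (eta - rho1) (p - rho2) rho3)
     \<and> code_dim (eval_code (Tset p f eta) (eta - rho1) (p - rho2) rho3)
          = (eta - rho1 + 1) * (p - rho2 + 1) * (rho3 + 1)"
proof -
  have char: "CHAR('a) = p"
    using assms(1,4,3) by (rule CHAR_eq_prime_of_card)
  have "card {g \<in> Gam p f eta. card (Zpts p f g) \<ge> nu * ((eta - rho1) + (p - rho2)) + 1}
      \<le> card (Gam p f eta)"
    by (rule card_mono) auto
  then have "rho3 < card (Gam p f eta)"
    using cnt by linarith
  then have inj: "inj_on (eval_map (Tset p f eta) (eta - rho1) (p - rho2) rho3)
      (box_coeffs (eta - rho1) (p - rho2) rho3)"
    using assms(1,7-10) char by (intro inj_on_eval_map_Tset) auto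
  {
    fix a b c
    assume abc: "(a, b, c) \<in> Tset p f eta"
    note vertical_fiber_subset_Tset[OF assms(1) char abc] card_vertical_fiber[OF char]
      lower_code_dim_min_dist[OF assms(1) char abc, where A = "eta - rho1" and B = "p - rho2" and K = rho3,
        unfolded diff_diff_cancel[OF assms(10)]]
      middle_code_dim_min_dist[OF assms(1) char Tset_imp_Gam[OF abc],
        where A = "eta - rho1" and B = "p - rho2" and K = rho3,
        unfolded diff_diff_cancel[OF assms(8)] diff_diff_cancel[OF assms(10)]]
      vertical_fiber_subset_slice[OF assms(1) char abc]
  }
  note pointwise = this
  show ?thesis
    unfolding Let_def
    by (intro conjI allI impI inj code_dim_eval_code[OF inj])
      (erule pointwise(1), erule pointwise(2), erule pointwise(3), erule pointwise(4),
        erule pointwise(5), erule pointwise(6), erule pointwise(7))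
qed

end
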